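(* Let $P$ be a finite subset of $\mathbb{S}^n$ without antipodal pairs and let $a\in\mathbb{R}$. If the function $x\mapsto d_{\mathbb{S}^n}(x,P)+a$ belongs to $\mathbf{E}(\mathbb{S}^n)$, then $a=\frac12\mathrm{diam}(P)$ and $P$ is pointwise extremal.
   Context: $\mathbb{S}^n$ is the unit $n$-sphere with geodesic metric $d_{\mathbb{S}^n}$; $d_{\mathbb{S}^n}(x,P)=\min_{p\in P}d_{\mathbb{S}^n}(x,p)$. For a metric space $X$, $\Delta(X)=\{f:X\to\mathbb{R}\text{ bounded}:f(x)+f(x')\ge d_X(x,x')\}$ and the tight span $\mathbf{E}(X)$ is the set of pointwise-minimal elements of $\Delta(X)$. For $p\in P$, $\mathrm{comax}_P(p)=\{p'\in P:d_{\mathbb{S}^n}(p,p')=\mathrm{diam}(P)\}$. A point $p\in P$ is held by $P$ if for every tangent vector $v\in T_p\mathbb{S}^n$ there is $p'\in\mathrm{comax}_P(p)$ with $\langle v,\exp_p^{-1}(p')\rangle\ge0$, where $\exp_p^{-1}(p')$ is the unit tangent vector at $p$ of the shortest geodesic from $p$ to $p'$. $P$ is pointwise extremal if every point of $P$ is held by $P$. *)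

theory Defs
  imports "HOL-Analysis.Analysis"
begin

text \<open>The unit n-sphere is modelled as sphere 0 1 in a Euclidean space 'a
  of dimension n+1.  Geodesic distance between unit vectors.\<close>

definition sdist :: "'a::euclidean_space \<Rightarrow> 'a \<Rightarrow> real" where
  "sdist x y = arccos (x \<bullet> y)"

definition sdist_set :: "'a::euclidean_space \<Rightarrow> 'a set \<Rightarrow> real" where
  "sdist_set x P = Min ((\<lambda>p. sdist x p) ` P)"

definition sdiam :: "'a::euclidean_space set \<Rightarrow> real" where
  "sdiam P = Sup {sdist p q | p q. p \<in> P \<and> q \<in> P}"

definition Delta :: "'b set \<Rightarrow> ('b \<Rightarrow> 'b \<Rightarrow> real) \<Rightarrow> ('b \<Rightarrow> real) set" where
  "Delta X d = {f. bounded (f ` X) \<and> (\<forall>x\<in>X. \<forall>x'\<in>X. f x + f x' \<ge> d x x')}"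

definition tight_span :: "'b set \<Rightarrow> ('b \<Rightarrow> 'b \<Rightarrow> real) \<Rightarrow> ('b \<Rightarrow> real) set" where
  "tight_span X d = {f \<in> Delta X d. \<forall>g \<in> Delta X d.
      (\<forall>x\<in>X. g x \<le> f x) \<longrightarrow> (\<forall>x\<in>X. g x = f x)}"

definition comax :: "'a::euclidean_space set \<Rightarrow> 'a \<Rightarrow> 'a set" where
  "comax P p = {q \<in> P. sdist p q = sdiam P}"

text \<open>Inverse exponential map direction: unit tangent vector at p of the
  shortest geodesic from p to q (zero vector when q = p).\<close>

definition slog_dir :: "'a::euclidean_space \<Rightarrow> 'a \<Rightarrow> 'a" where
  "slog_dir p q = sgn (q - (p \<bullet> q) *\<^sub>R p)"

definition held :: "'a::euclidean_space set \<Rightarrow> 'a \<Rightarrow> bool" where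
  "held P p \<longleftrightarrow> (\<forall>v. v \<bullet> p = 0 \<longrightarrow> (\<exists>q \<in> comax P p. v \<bullet> slog_dir p q \<ge> 0))"

definition pointwise_extremal :: "'a::euclidean_space set \<Rightarrow> bool" where
  "pointwise_extremal P \<longleftrightarrow> (\<forall>p\<in>P. held P p)"

end

theory Submission
  imports Defs
begin

text \<open>Minimality of \<open>f = d(\<cdot>, P) + a\<close> in \<open>\<Delta>(\<bbbS>\<^sup>n)\<close> means that \<open>f x\<close> cannot be
  lowered at any single point, i.e. \<open>f x = sup\<^sub>y (d(x,y) - f y)\<close>.  Since
  \<open>d(x,y) \<le> d(x,q) + d(y,P)\<close> for the point \<open>q \<in> P\<close> farthest from \<open>x\<close>, this says that
  some point of \<open>P\<close> lies at distance at least \<open>d(x,P) + 2a\<close> from \<open>x\<close>.  For \<open>x \<in> P\<close> this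
  gives \<open>2a \<le> diam P\<close>, and the \<open>\<Delta>\<close>-inequality on two points of \<open>P\<close> gives the converse.
  If \<open>p \<in> P\<close> were not held, some tangent direction \<open>u\<close> at \<open>p\<close> would make an acute angle
  with every comaximal point of \<open>p\<close>.  Walking a short distance \<open>t\<close> from \<open>p\<close> along \<open>u\<close>
  reaches a point \<open>x\<close> with \<open>d(x,P) = t\<close> which is strictly closer than \<open>t + diam P\<close> to
  every point of \<open>P\<close>, a contradiction.  The absence of antipodal pairs gives
  \<open>diam P < \<pi>\<close>, which leaves room for the walk.\<close>

lemma abs_inner_le_1:
  fixes x y :: "'a::real_inner"
  assumes "norm x = 1" and "norm y = 1"
  shows "\<bar>x \<bullet> y\<bar> \<le> 1"
  using Cauchy_Schwarz_ineq2[of x y] assms by simp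

lemma sdist_commute: "sdist x y = sdist y x"
  by (simp add: sdist_def inner_commute)

lemma sdist_nonneg: "norm (x::'a::euclidean_space) = 1 \<Longrightarrow> norm y = 1 \<Longrightarrow> 0 \<le> sdist x y"
  unfolding sdist_def using abs_inner_le_1[of x y] by (intro arccos_lbound) auto

lemma sdist_le_pi: "norm (x::'a::euclidean_space) = 1 \<Longrightarrow> norm y = 1 \<Longrightarrow> sdist x y \<le> pi"
  unfolding sdist_def using abs_inner_le_1[of x y] by (intro arccos_ubound) auto

lemma sdist_self: "norm (x::'a::euclidean_space) = 1 \<Longrightarrow> sdist x x = 0"
  by (simp add: sdist_def norm_eq_1)

lemma cos_sdist: "norm (x::'a::euclidean_space) = 1 \<Longrightarrow> norm y = 1 \<Longrightarrow> cos (sdist x y) = x \<bullet> y"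
  unfolding sdist_def using abs_inner_le_1[of x y] by (simp add: cos_arccos_abs)

lemma sdist_eq_0_iff:
  fixes x y :: "'a::euclidean_space"
  assumes "norm x = 1" and "norm y = 1"
  shows "sdist x y = 0 \<longleftrightarrow> x = y"
proof
  assume "sdist x y = 0"
  then have "x \<bullet> y = 1" using cos_sdist[OF assms] by simp
  with assms have "(x - y) \<bullet> (x - y) = 0"
    by (simp add: norm_eq_1 inner_diff_left inner_diff_right inner_commute)
  then show "x = y" by simp
qed (simp add: assms sdist_self)

lemma sdist_eq_pi_iff:
  fixes x y :: "'a::euclidean_space"
  assumes "norm x = 1" and "norm y = 1"
  shows "sdist x y = pi \<longleftrightarrow> y = - x"
proof
  assume "sdist x y = pi"
  then have "x \<bullet> y = -1" using cos_sdist[OF assms] by simp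
  with assms have "(x + y) \<bullet> (x + y) = 0"
    by (simp add: norm_eq_1 inner_add_left inner_add_right inner_commute)
  then show "y = - x" by (simp add: add_eq_0_iff)
qed (use assms in \<open>simp add: sdist_def norm_eq_1\<close>)

text \<open>The spherical law of cosines, as an inequality: project \<open>x\<close> and \<open>z\<close> onto the
  orthogonal complement of \<open>y\<close> and apply Cauchy--Schwarz to the projections.\<close>

lemma cos_sdist_add_le:
  fixes x y z :: "'a::euclidean_space"
  assumes x: "norm x = 1" and y: "norm y = 1" and z: "norm z = 1"
  shows "cos (sdist x y + sdist y z) \<le> x \<bullet> z"
proof -
  define x' z' where "x' = x - (x \<bullet> y) *\<^sub>R y" and "z' = z - (z \<bullet> y) *\<^sub>R y"
  have unit: "x \<bullet> x = 1" "y \<bullet> y = 1" "z \<bullet> z = 1" using x y z by (simp_all add: norm_eq_1)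
  have "sin (sdist x y) = sqrt (1 - (x \<bullet> y)\<^sup>2)"
    unfolding sdist_def using abs_inner_le_1[OF x y] by (simp add: sin_arccos_abs)
  also have "\<dots> = norm x'"
    unfolding norm_eq_sqrt_inner x'_def using unit
    by (simp add: inner_diff inner_commute power2_eq_square algebra_simps)
  finally have sin_xy: "sin (sdist x y) = norm x'" .
  have "sin (sdist y z) = sqrt (1 - (y \<bullet> z)\<^sup>2)"
    unfolding sdist_def using abs_inner_le_1[OF y z] by (simp add: sin_arccos_abs)
  also have "\<dots> = norm z'"
    unfolding norm_eq_sqrt_inner z'_def using unit
    by (simp add: inner_diff inner_commute power2_eq_square algebra_simps)
  finally have sin_yz: "sin (sdist y z) = norm z'" .
  have "x' \<bullet> z' = x \<bullet> z - (x \<bullet> y) * (y \<bullet> z)"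
    unfolding x'_def z'_def using unit by (simp add: inner_diff inner_commute algebra_simps)
  moreover have "- (norm x' * norm z') \<le> x' \<bullet> z'"
    using Cauchy_Schwarz_ineq2[of x' z'] by linarith
  ultimately show ?thesis
    by (simp add: cos_add sin_xy sin_yz cos_sdist x y z)
qed

lemma sdist_triangle:
  fixes x y z :: "'a::euclidean_space"
  assumes x: "norm x = 1" and y: "norm y = 1" and z: "norm z = 1"
  shows "sdist x z \<le> sdist x y + sdist y z"
proof (cases "sdist x y + sdist y z \<le> pi")
  case True
  have "sdist x z = arccos (x \<bullet> z)" by (simp add: sdist_def)
  also have "\<dots> \<le> arccos (cos (sdist x y + sdist y z))"
    using cos_sdist_add_le[OF x y z] abs_inner_le_1[OF x z] by (intro arccos_le_arccos) auto
  also have "\<dots> = sdist x y + sdist y z"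
    using True sdist_nonneg[OF x y] sdist_nonneg[OF y z] by (intro arccos_cos) auto
  finally show ?thesis .
qed (use sdist_le_pi[OF x z] in linarith)

lemma norm_great_circle:
  fixes p u :: "'a::real_inner"
  assumes "norm p = 1" and "norm u = 1" and "u \<bullet> p = 0"
  shows "norm (cos t *\<^sub>R p + sin t *\<^sub>R u) = 1"
proof -
  have "(cos t *\<^sub>R p + sin t *\<^sub>R u) \<bullet> (cos t *\<^sub>R p + sin t *\<^sub>R u) = (cos t)\<^sup>2 + (sin t)\<^sup>2"
    using assms by (simp add: norm_eq_1 inner_add_left inner_add_right inner_commute power2_eq_square)
  then show ?thesis by (simp add: norm_eq_1)
qed

lemma sdist_great_circle:
  fixes p u :: "'a::euclidean_space"
  assumes "norm p = 1" and "u \<bullet> p = 0" and "0 \<le> t" and "t \<le> pi"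
  shows "sdist (cos t *\<^sub>R p + sin t *\<^sub>R u) p = t"
  using assms by (simp add: sdist_def norm_eq_1 inner_add_left arccos_cos)

lemma sdist_great_circle_less:
  fixes p q u :: "'a::euclidean_space"
  assumes p: "norm p = 1" and q: "norm q = 1" and u: "norm u = 1" and "u \<bullet> p = 0"
    and acute: "0 < u \<bullet> q" and "0 < t" and t: "t + sdist p q < pi"
  shows "sdist (cos t *\<^sub>R p + sin t *\<^sub>R u) q < t + sdist p q"
proof -
  define x where "x = cos t *\<^sub>R p + sin t *\<^sub>R u"
  have x: "norm x = 1" unfolding x_def using p u \<open>u \<bullet> p = 0\<close> by (rule norm_great_circle)
  have D: "0 \<le> sdist p q" "sdist p q \<le> pi" using sdist_nonneg[OF p q] sdist_le_pi[OF p q] .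
  have "0 < sin t" using \<open>0 < t\<close> t D by (intro sin_gt_zero) auto
  then have "0 < sin t * (u \<bullet> q)" and "0 \<le> sin t * sin (sdist p q)"
    using acute D by (simp_all add: sin_ge_zero)
  then have "cos (t + sdist p q) < cos t * cos (sdist p q) + sin t * (u \<bullet> q)"
    by (simp add: cos_add)
  also have "\<dots> = x \<bullet> q" unfolding x_def by (simp add: inner_add_left cos_sdist[OF p q])
  finally have "arccos (x \<bullet> q) < arccos (cos (t + sdist p q))"
    using abs_inner_le_1[OF x q] by (intro arccos_less_arccos) auto
  also have "\<dots> = t + sdist p q" using \<open>0 < t\<close> t D by (intro arccos_cos) auto
  finally show ?thesis unfolding x_def sdist_def .
qed

lemma sdist_set_ge_iff:
  "finite P \<Longrightarrow> P \<noteq> {} \<Longrightarrow> c \<le> sdist_set x P \<longleftrightarrow> (\<forall>q\<in>P. c \<le> sdist x q)"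
  by (simp add: sdist_set_def)

lemma sdist_set_le_iff:
  "finite P \<Longrightarrow> P \<noteq> {} \<Longrightarrow> sdist_set x P \<le> c \<longleftrightarrow> (\<exists>q\<in>P. sdist x q \<le> c)"
  by (simp add: sdist_set_def Min_le_iff)

lemma sdist_set_self:
  fixes P :: "'a::euclidean_space set"
  assumes "finite P" and "P \<subseteq> sphere 0 1" and "p \<in> P"
  shows "sdist_set p P = 0"
proof -
  have unit: "\<And>q. q \<in> P \<Longrightarrow> norm q = 1" and "P \<noteq> {}" using assms(2,3) by auto
  have "sdist_set p P \<le> 0"
    using sdist_set_le_iff[OF assms(1) \<open>P \<noteq> {}\<close>] sdist_self[OF unit[OF assms(3)]] assms(3)
    by (auto intro!: bexI[of _ p])
  moreover have "0 \<le> sdist_set p P"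
    using sdist_set_ge_iff[OF assms(1) \<open>P \<noteq> {}\<close>] sdist_nonneg[OF unit[OF assms(3)] unit] by blast
  ultimately show ?thesis by simp
qed

lemma sdiam_eq_Max:
  assumes "finite P" and "P \<noteq> {}"
  shows "sdiam P = Max (case_prod sdist ` (P \<times> P))"
proof -
  have "{sdist p q | p q. p \<in> P \<and> q \<in> P} = case_prod sdist ` (P \<times> P)" by auto
  then show ?thesis using assms by (simp add: sdiam_def cSup_eq_Max)
qed

lemma sdist_le_sdiam: "finite P \<Longrightarrow> p \<in> P \<Longrightarrow> q \<in> P \<Longrightarrow> sdist p q \<le> sdiam P"
  by (subst sdiam_eq_Max) (auto intro: Max_ge)

lemma sdiam_le_iff:
  "finite P \<Longrightarrow> P \<noteq> {} \<Longrightarrow> sdiam P \<le> c \<longleftrightarrow> (\<forall>p\<in>P. \<forall>q\<in>P. sdist p q \<le> c)"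
  by (simp add: sdiam_eq_Max)

lemma sdiam_attained:
  assumes "finite P" and "P \<noteq> {}"
  obtains p q where "p \<in> P" and "q \<in> P" and "sdiam P = sdist p q"
proof -
  have "sdiam P \<in> case_prod sdist ` (P \<times> P)"
    unfolding sdiam_eq_Max[OF assms] using assms by (intro Max_in) auto
  then show ?thesis using that by auto
qed

lemma sdiam_less_pi:
  fixes P :: "'a::euclidean_space set"
  assumes "finite P" and "P \<noteq> {}" and "P \<subseteq> sphere 0 1" and "\<forall>p\<in>P. - p \<notin> P"
  shows "sdiam P < pi"
proof -
  obtain p q where pq: "p \<in> P" "q \<in> P" "sdiam P = sdist p q"
    using sdiam_attained[OF assms(1,2)] .
  then have "norm p = 1" "norm q = 1" using assms(3) by auto
  then have "sdist p q \<le> pi" and "sdist p q \<noteq> pi"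
    using sdist_le_pi[OF \<open>norm p = 1\<close> \<open>norm q = 1\<close>] sdist_eq_pi_iff[OF \<open>norm p = 1\<close> \<open>norm q = 1\<close>]
      pq(1,2) assms(4) by auto
  then show ?thesis using pq(3) by simp
qed

text \<open>Otherwise lowering \<open>f\<close> at \<open>x\<close> to \<open>max c (d x x / 2)\<close> stays in \<open>Delta X d\<close>,
  contradicting minimality; the term \<open>d x x / 2\<close> takes care of the diagonal.\<close>

lemma tight_span_le:
  assumes f: "f \<in> tight_span X d" and sym: "\<And>x y. x \<in> X \<Longrightarrow> y \<in> X \<Longrightarrow> d x y = d y x"
    and "x \<in> X" and bound: "\<And>y. y \<in> X \<Longrightarrow> d x y - f y \<le> c"
  shows "f x \<le> c"
proof (rule ccontr)
  assume "\<not> f x \<le> c"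
  have fD: "f \<in> Delta X d" and min: "\<And>g. g \<in> Delta X d \<Longrightarrow> \<forall>y\<in>X. g y \<le> f y \<Longrightarrow> \<forall>y\<in>X. g y = f y"
    using f by (auto simp: tight_span_def)
  define g where "g = f(x := max c (d x x / 2))"
  have g_Delta: "g \<in> Delta X d"
    unfolding Delta_def
  proof (intro CollectI conjI ballI)
    have "g ` X \<subseteq> insert (g x) (f ` X)" by (auto simp: g_def)
    from bounded_subset[OF _ this] show "bounded (g ` X)" using fD by (simp add: Delta_def)
  next
    have side: "d x w \<le> g x + g w" if "w \<in> X" for w
    proof (cases "w = x")
      case False
      then show ?thesis using bound[OF that] by (simp add: g_def)
    qed (simp add: g_def)
    fix y z assume "y \<in> X" "z \<in> X"
    consider "y = x" | "z = x" | "y \<noteq> x" "z \<noteq> x" by blast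
    then show "d y z \<le> g y + g z"
    proof cases
      case 1
      then show ?thesis using side[OF \<open>z \<in> X\<close>] by simp
    next
      case 2
      then show ?thesis using side[OF \<open>y \<in> X\<close>] sym[OF \<open>y \<in> X\<close> \<open>x \<in> X\<close>] by simp
    next
      case 3
      then show ?thesis using fD \<open>y \<in> X\<close> \<open>z \<in> X\<close> by (simp add: g_def Delta_def)
    qed
  qed
  have "d x x \<le> f x + f x" using fD \<open>x \<in> X\<close> unfolding Delta_def by blast
  then have "\<forall>y\<in>X. g y \<le> f y" using \<open>\<not> f x \<le> c\<close> by (simp add: g_def)
  then have "g x = f x" using min[OF g_Delta] \<open>x \<in> X\<close> by blast
  then have "f x = d x x / 2" using \<open>\<not> f x \<le> c\<close> by (simp add: g_def max_def split: if_splits)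
  then show False using bound[OF \<open>x \<in> X\<close>] \<open>\<not> f x \<le> c\<close> by simp
qed

lemma tight_span_sdist_set_farthest:
  fixes P :: "'a::euclidean_space set"
  assumes fin: "finite P" and ne: "P \<noteq> {}" and sub: "P \<subseteq> sphere 0 1"
    and ts: "(\<lambda>x. sdist_set x P + a) \<in> tight_span (sphere 0 1) sdist"
    and x: "x \<in> sphere 0 1"
  shows "\<exists>q\<in>P. sdist_set x P + 2 * a \<le> sdist x q"
proof -
  have "Max (sdist x ` P) \<in> sdist x ` P" using fin ne by (intro Max_in) auto
  then obtain q where "q \<in> P" and q: "sdist x q = Max (sdist x ` P)" by auto
  have "sdist_set x P + a \<le> sdist x q - a"
  proof (rule tight_span_le[OF ts _ x])
    fix y :: 'a assume y: "y \<in> sphere 0 1"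
    obtain q' where "q' \<in> P" and near: "sdist y q' \<le> sdist_set y P"
      using sdist_set_le_iff[OF fin ne] by blast
    have "sdist x y \<le> sdist x q' + sdist q' y"
      using \<open>q' \<in> P\<close> sub x y by (intro sdist_triangle) auto
    also have "\<dots> \<le> sdist x q + sdist_set y P"
    proof -
      have "sdist x q' \<le> sdist x q" unfolding q using fin \<open>q' \<in> P\<close> by (intro Max_ge) auto
      then show ?thesis using near sdist_commute[of q' y] by simp
    qed
    finally show "sdist x y - (sdist_set y P + a) \<le> sdist x q - a" by simp
  qed (rule sdist_commute)
  then have "sdist_set x P + 2 * a \<le> sdist x q" by simp
  with \<open>q \<in> P\<close> show ?thesis by blast
qed

lemma tight_span_sdist_set_offset:
  fixes P :: "'a::euclidean_space set"
  assumes fin: "finite P" and ne: "P \<noteq> {}" and sub: "P \<subseteq> sphere 0 1"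
    and ts: "(\<lambda>x. sdist_set x P + a) \<in> tight_span (sphere 0 1) sdist"
  shows "a = sdiam P / 2"
proof -
  have Delta: "\<forall>x\<in>sphere 0 1. \<forall>y\<in>sphere 0 1. sdist x y \<le> (sdist_set x P + a) + (sdist_set y P + a)"
    using ts unfolding tight_span_def Delta_def by blast
  have "sdist p q \<le> 2 * a" if "p \<in> P" "q \<in> P" for p q
  proof -
    have "p \<in> sphere 0 1" "q \<in> sphere 0 1" using sub that by auto
    with Delta have "sdist p q \<le> (sdist_set p P + a) + (sdist_set q P + a)" by blast
    then show ?thesis using sdist_set_self[OF fin sub] that by simp
  qed
  then have "sdiam P \<le> 2 * a" using fin ne by (simp add: sdiam_le_iff)
  moreover obtain p where "p \<in> P" using ne by auto
  then have "p \<in> sphere 0 1" using sub by auto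
  with tight_span_sdist_set_farthest[OF fin ne sub ts]
  obtain q where "q \<in> P" and "sdist_set p P + 2 * a \<le> sdist p q" by auto
  then have "2 * a \<le> sdiam P"
    using \<open>p \<in> P\<close> fin sub sdist_set_self sdist_le_sdiam by fastforce
  ultimately show ?thesis by simp
qed

lemma inner_slog_dir_less_0_iff:
  fixes p q v :: "'a::euclidean_space"
  assumes "v \<bullet> p = 0"
  shows "v \<bullet> slog_dir p q < 0 \<longleftrightarrow> v \<bullet> q < 0"
proof -
  have vq: "v \<bullet> (q - (p \<bullet> q) *\<^sub>R p) = v \<bullet> q" using assms by (simp add: inner_diff_right)
  then have "v \<bullet> slog_dir p q = (v \<bullet> q) / norm (q - (p \<bullet> q) *\<^sub>R p)"
    by (simp add: slog_dir_def sgn_div_norm divide_inverse_commute)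
  then show ?thesis
    by (cases "q - (p \<bullet> q) *\<^sub>R p = 0") (use vq in \<open>auto simp: divide_less_0_iff\<close>)
qed

lemma not_held_obtains_acute_direction:
  fixes P :: "'a::euclidean_space set"
  assumes "\<not> held P p" and "comax P p \<noteq> {}"
  obtains u where "norm u = 1" and "u \<bullet> p = 0" and "\<And>q. q \<in> comax P p \<Longrightarrow> 0 < u \<bullet> q"
proof -
  obtain v where vp: "v \<bullet> p = 0" and obtuse: "\<And>q. q \<in> comax P p \<Longrightarrow> v \<bullet> q < 0"
    using assms(1) inner_slog_dir_less_0_iff by (fastforce simp: held_def not_le)
  then have "v \<noteq> 0" using assms(2) by fastforce
  show ?thesis
  proof
    show "norm (- sgn v) = 1" using \<open>v \<noteq> 0\<close> by (simp add: norm_sgn)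
    show "- sgn v \<bullet> p = 0" using vp by (simp add: sgn_div_norm)
    show "0 < - sgn v \<bullet> q" if "q \<in> comax P p" for q
      using obtuse[OF that] \<open>v \<noteq> 0\<close> by (simp add: sgn_div_norm mult_pos_neg)
  qed
qed

lemma sdist_set_ge_if_isolated:
  fixes P :: "'a::euclidean_space set"
  assumes "finite P" and "P \<subseteq> sphere 0 1" and "p \<in> P" and "norm x = 1" and "sdist x p = t"
    and isolated: "\<And>q. q \<in> P - {p} \<Longrightarrow> 2 * t \<le> sdist p q"
  shows "t \<le> sdist_set x P"
proof -
  have "t \<le> sdist x q" if "q \<in> P" for q
  proof (cases "q = p")
    case False
    have "sdist p q \<le> sdist p x + sdist x q"
      using assms that by (intro sdist_triangle) auto
    then show ?thesis using isolated[of q] that False assms(5) by (simp add: sdist_commute)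
  qed (use assms(5) in simp)
  moreover have "P \<noteq> {}" using assms(3) by auto
  ultimately show ?thesis using assms(1) by (simp add: sdist_set_ge_iff)
qed

lemma obtain_isolating_radius:
  fixes P :: "'a::euclidean_space set"
  assumes "finite P" and "P \<subseteq> sphere 0 1" and "p \<in> P" and "D < pi"
  obtains t where "0 < t" and "t + D < pi" and "\<And>q. q \<in> P - {p} \<Longrightarrow> 2 * t \<le> sdist p q"
proof -
  define r where "r = Min (insert (pi - D) (sdist p ` (P - {p})))"
  have unit: "\<And>q. q \<in> P \<Longrightarrow> norm q = 1" using assms(2) by auto
  have "0 < sdist p q" if "q \<in> P - {p}" for q
    using that sdist_nonneg[OF unit[OF assms(3)], of q] sdist_eq_0_iff[OF unit[OF assms(3)], of q] unit
    by (auto simp: less_le)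
  then have "0 < r" unfolding r_def using assms(1,4) by simp
  moreover have "r \<le> pi - D" and "\<And>q. q \<in> P - {p} \<Longrightarrow> r \<le> sdist p q"
    unfolding r_def using assms(1) by auto
  ultimately show ?thesis by (intro that[of "r / 2"]) auto
qed

lemma held_if_farthest:
  fixes P :: "'a::euclidean_space set"
  assumes fin: "finite P" and sub: "P \<subseteq> sphere 0 1" and p: "p \<in> P" and diam: "sdiam P < pi"
    and far: "\<And>x. x \<in> sphere 0 1 \<Longrightarrow> \<exists>q\<in>P. sdist_set x P + sdiam P \<le> sdist x q"
  shows "held P p"
proof (rule ccontr)
  assume "\<not> held P p"
  define D where "D = sdiam P"
  have unit: "\<And>q. q \<in> P \<Longrightarrow> norm q = 1" using sub by auto
  have "comax P p \<noteq> {}"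
    using far[of p] p unit sdist_le_sdiam[OF fin p] sdist_set_self[OF fin sub p]
    by (force simp: comax_def)
  then obtain u where u: "norm u = 1" "u \<bullet> p = 0" and acute: "\<And>q. q \<in> comax P p \<Longrightarrow> 0 < u \<bullet> q"
    using not_held_obtains_acute_direction \<open>\<not> held P p\<close> by blast
  obtain t where t: "0 < t" "t + D < pi" and isolated: "\<And>q. q \<in> P - {p} \<Longrightarrow> 2 * t \<le> sdist p q"
    using obtain_isolating_radius[OF fin sub p] diam by (auto simp: D_def)
  define x where "x = cos t *\<^sub>R p + sin t *\<^sub>R u"
  have x: "norm x = 1" unfolding x_def using unit[OF p] u by (rule norm_great_circle)
  have "0 \<le> D" using sdist_le_sdiam[OF fin p p] sdist_self[OF unit[OF p]] by (simp add: D_def)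
  then have xp: "sdist x p = t" unfolding x_def using unit[OF p] u t by (intro sdist_great_circle) auto
  have "t \<le> sdist_set x P" using fin sub p x xp isolated by (rule sdist_set_ge_if_isolated)
  then obtain q where "q \<in> P" and "t + D \<le> sdist x q" using far[of x] x by (force simp: D_def)
  show False
  proof (cases "q \<in> comax P p")
    case True
    then have "sdist p q = D" by (simp add: comax_def D_def)
    then have "sdist x q < t + D"
      using sdist_great_circle_less[OF unit[OF p] unit[OF \<open>q \<in> P\<close>] u acute[OF True] t(1)] t(2)
      by (simp add: x_def)
    with \<open>t + D \<le> sdist x q\<close> show False by simp
  next
    case False
    then have "sdist p q < D"
      using sdist_le_sdiam[OF fin p \<open>q \<in> P\<close>] \<open>q \<in> P\<close> by (auto simp: comax_def D_def less_le)
    moreover have "sdist x q \<le> sdist x p + sdist p q"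
      using x unit[OF p] unit[OF \<open>q \<in> P\<close>] by (rule sdist_triangle)
    ultimately show False using \<open>t + D \<le> sdist x q\<close> xp by simp
  qed
qed

theorem proposition4p8:
  fixes P :: "'a::euclidean_space set" and a :: real
  assumes "finite P" and "P \<noteq> {}" and "P \<subseteq> sphere 0 1"
    and "\<forall>p\<in>P. - p \<notin> P"
    and "(\<lambda>x. sdist_set x P + a) \<in> tight_span (sphere 0 1) sdist"
  shows "a = sdiam P / 2 \<and> pointwise_extremal P"
proof
  show a: "a = sdiam P / 2" using assms(1-3,5) by (rule tight_span_sdist_set_offset)
  have "\<exists>q\<in>P. sdist_set x P + sdiam P \<le> sdist x q" if "x \<in> sphere 0 1" for x
    using tight_span_sdist_set_farthest[OF assms(1-3,5) that] a by simp
  then show "pointwise_extremal P"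
    using held_if_farthest[OF assms(1,3) _ sdiam_less_pi[OF assms(1-4)]]
    by (simp add: pointwise_extremal_def)
qed

end
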